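(* Consider an environment with $K$ channels and finite state space $\mathcal{S}$ evolving as an irreducible Markov chain with action-independent transition matrix $\mathbf{P}=\{P_{s,j}\}$ and stationary distribution $\boldsymbol{\pi}=\boldsymbol{\pi}\mathbf{P}$; let $A_{j,a}=1$ iff channel $a$ is idle in state $j$, $\mathcal{T}_j=\{a:A_{j,a}=1\}$, $m_s=\arg\max_j P_{s,j}$. The ML prediction-and-access algorithm chooses, in state $s$, channel $a\in\mathcal{T}_{m_s}$ with probability $q_s(a)$; accessing a channel $a$ that is idle in the next state yields expected reward $C_a$, otherwise reward $0$; $\mathrm{Thr}$ is the almost-sure limiting average reward. Then: (i) If $q_s(a)=I_{\{a=a^*(s)\}}$ with $a^*(s)=\arg\max_{a\in\mathcal{T}_{m_s}}C_a$, then $$\mathrm{Thr}=\sum_{s\in\mathcal{S}}\pi_s\max_{a\in\mathcal{T}_{m_s}}\{C_a\}\Big(P_{s,m_s}+\sum_{j\ne m_s}P_{s,j}A_{j,a^*(s)}\Big).$$ (ii) If $C_a=C$ for all $a$ and $q_s(a)=\frac{1}{|\mathcal{T}_{m_s}|}I_{\{a\in\mathcal{T}_{m_s}\}}$, then $$\mathrm{Thr}=C\sum_{s\in\mathcal{S}}\pi_s\Big(P_{s,m_s}+\sum_{j\ne m_s}P_{s,j}\frac{|\mathcal{T}_j\cap\mathcal{T}_{m_s}|}{|\mathcal{T}_{m_s}|}\Big)=C\sum_{s\in\mathcal{S}}\sum_{j\in\mathcal{S}}\pi_sP_{s,j}\frac{\sum_{a=1}^KA_{j,a}A_{m_s,a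}}{\sum_{a=1}^KA_{m_s,a}}.$$
   Context: $I_{\{\cdot\}}$ denotes the indicator function. The ML prediction-and-access algorithm predicts the most likely next state $m_s$ and then accesses a channel idle in that predicted state. *)

theory Defs
  imports "HOL-Probability.Probability"
begin

definition stochastic_matrix :: "('s::finite \<Rightarrow> 's \<Rightarrow> real) \<Rightarrow> bool" where
  "stochastic_matrix P \<longleftrightarrow> (\<forall>i j. 0 \<le> P i j) \<and> (\<forall>i. (\<Sum>j\<in>UNIV. P i j) = 1)"

fun mpow :: "('s::finite \<Rightarrow> 's \<Rightarrow> real) \<Rightarrow> nat \<Rightarrow> 's \<Rightarrow> 's \<Rightarrow> real" where
  "mpow P 0 i j = (if i = j then 1 else 0)"
| "mpow P (Suc n) i j = (\<Sum>k\<in>UNIV. mpow P n i k * P k j)"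

definition irreducible_chain :: "('s::finite \<Rightarrow> 's \<Rightarrow> real) \<Rightarrow> bool" where
  "irreducible_chain P \<longleftrightarrow> (\<forall>i j. \<exists>n. mpow P n i j > 0)"

definition stationary_dist :: "('s::finite \<Rightarrow> 's \<Rightarrow> real) \<Rightarrow> ('s \<Rightarrow> real) \<Rightarrow> bool" where
  "stationary_dist P pst \<longleftrightarrow> (\<forall>j. 0 \<le> pst j) \<and> (\<Sum>j\<in>UNIV. pst j) = 1 \<and>
     (\<forall>j. pst j = (\<Sum>i\<in>UNIV. pst i * P i j))"

text \<open>Joint law of the state process X and the access process Ch:
  states evolve as a Markov chain with action-independent transition matrix P
  (arbitrary initial distribution); in state s, channel a is accessed with probability
  q s a, independently of the past.\<close>
definition access_process ::
  "'w measure \<Rightarrow> ('s::finite \<Rightarrow> 's \<Rightarrow> real) \<Rightarrow> ('s \<Rightarrow> 'c::finite \<Rightarrow> real)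
   \<Rightarrow> (nat \<Rightarrow> 'w \<Rightarrow> 's) \<Rightarrow> (nat \<Rightarrow> 'w \<Rightarrow> 'c) \<Rightarrow> bool" where
  "access_process M P q X Ch \<longleftrightarrow>
     (\<forall>n. X n \<in> measurable M (count_space UNIV)) \<and>
     (\<forall>n. Ch n \<in> measurable M (count_space UNIV)) \<and>
     (\<forall>n (s::nat \<Rightarrow> 's) (a::nat \<Rightarrow> 'c).
        measure M {\<omega>\<in>space M. \<forall>k\<le>n. X k \<omega> = s k \<and> Ch k \<omega> = a k}
        = measure M {\<omega>\<in>space M. X 0 \<omega> = s 0}
          * (\<Prod>k<n. q (s k) (a k) * P (s k) (s (Suc k))) * q (s n) (a n))"

definition avg_reward ::
  "('s \<Rightarrow> 'c \<Rightarrow> bool) \<Rightarrow> ('c \<Rightarrow> real) \<Rightarrow> (nat \<Rightarrow> 'w \<Rightarrow> 's) \<Rightarrow> (nat \<Rightarrow> 'w \<Rightarrow> 'c)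
   \<Rightarrow> 'w \<Rightarrow> nat \<Rightarrow> real" where
  "avg_reward idle C X Ch \<omega> n =
     (\<Sum>t<n. C (Ch t \<omega>) * of_bool (idle (X (Suc t) \<omega>) (Ch t \<omega>))) / real n"

end

theory Submission
  imports Defs "HOL-Library.Discrete_Functions"
begin

(* For a reward f(X t, Ch t, X (t+1)) let h x be its mean given X t = x and let mu be the
   pst-average of h. Irreducibility makes the P-harmonic functions constant, so by a dimension
   count the Poisson equation g - P g = h - mu has a solution g. Then f - mu is a bounded
   martingale difference plus the telescoping term g (X t) - g (X (t+1)); the partial sums of the
   martingale differences have second moment O(n), so along n = k^2 their averages tend to 0
   almost surely, and bounded increments fill the gaps between squares. Hence the average reward
   tends to mu almost surely, and both formulas are mu evaluated for the two policies. *)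

subsection \<open>Harmonic functions and the Poisson equation\<close>

lemma mpow_nonneg: "stochastic_matrix P \<Longrightarrow> 0 \<le> mpow P n i j"
  by (induction n arbitrary: j) (auto simp: stochastic_matrix_def intro!: sum_nonneg)

lemma mpow_Suc_posE:
  assumes sto: "stochastic_matrix P" and pos: "mpow P (Suc n) i j > 0"
  obtains k where "mpow P n i k > 0" and "P k j > 0"
proof -
  have "\<exists>k. mpow P n i k * P k j > 0"
  proof (rule ccontr)
    assume "\<not> (\<exists>k. mpow P n i k * P k j > 0)"
    then have "(\<Sum>k\<in>UNIV. mpow P n i k * P k j) \<le> 0"
      by (intro sum_nonpos) (simp add: not_less)
    with pos show False by simp
  qed
  then obtain k where "mpow P n i k * P k j > 0" ..
  moreover have "0 \<le> mpow P n i k" "0 \<le> P k j"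
    using mpow_nonneg[OF sto] sto by (auto simp: stochastic_matrix_def)
  ultimately show thesis
    by (intro that) (auto simp: zero_less_mult_iff)
qed

lemma harmonic_function_const:
  fixes P :: "'s::finite \<Rightarrow> 's \<Rightarrow> real"
  assumes sto: "stochastic_matrix P" and irr: "irreducible_chain P"
    and harmonic: "\<And>x. g x = (\<Sum>y\<in>UNIV. P x y * g y)"
  shows "g x = g y"
proof -
  define mx where "mx = Max (range g)"
  have le_mx: "g z \<le> mx" for z
    unfolding mx_def by simp
  have "mx \<in> range g"
    unfolding mx_def by (rule Max_in) auto
  then obtain x0 where x0: "g x0 = mx" by auto
  have max_step: "g z = mx" if gk: "g k = mx" and pos: "P k z > 0" for k z
  proof -
    have "(\<Sum>y\<in>UNIV. P k y * (mx - g y)) = (\<Sum>y\<in>UNIV. P k y) * mx - (\<Sum>y\<in>UNIV. P k y * g y)"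
      by (simp only: right_diff_distrib sum_subtractf sum_distrib_right)
    also have "\<dots> = 0"
      using sto harmonic[of k] gk by (simp add: stochastic_matrix_def)
    finally have "\<forall>y\<in>UNIV. P k y * (mx - g y) = 0"
      by (subst (asm) sum_nonneg_eq_0_iff) (use sto le_mx in \<open>auto simp: stochastic_matrix_def\<close>)
    then have "P k z * (mx - g z) = 0" by simp
    with pos show "g z = mx" by simp
  qed
  have "g z = mx" if "mpow P n x0 z > 0" for n z
    using that
  proof (induction n arbitrary: z)
    case 0
    then show ?case using x0 by (simp split: if_splits)
  next
    case (Suc n)
    then obtain k where "mpow P n x0 k > 0" "P k z > 0"
      using mpow_Suc_posE[OF sto] by blast
    then show ?case using Suc.IH max_step by blast
  qed
  then have "g z = mx" for z
    using irr unfolding irreducible_chain_def by blast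
  then show ?thesis by simp
qed

definition poisson_op :: "('s::finite \<Rightarrow> 's \<Rightarrow> real) \<Rightarrow> real^'s \<Rightarrow> real^'s" where
  "poisson_op P g = (\<chi> x. g$x - (\<Sum>y\<in>UNIV. P x y * g$y))"

lemma linear_poisson_op: "linear (poisson_op P)"
  by (rule linearI) (auto simp: poisson_op_def vec_eq_iff algebra_simps sum.distrib sum_distrib_left)

lemma stationary_orthogonal_poisson_op:
  assumes "stationary_dist P pst"
  shows "(\<chi> x. pst x) \<bullet> poisson_op P g = 0"
proof -
  have stat: "(\<Sum>x\<in>UNIV. pst x * P x y) = pst y" for y
    using assms unfolding stationary_dist_def by metis
  have "(\<chi> x. pst x) \<bullet> poisson_op P g
      = (\<Sum>x\<in>UNIV. pst x * g$x) - (\<Sum>x\<in>UNIV. \<Sum>y\<in>UNIV. pst x * P x y * g$y)"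
    by (simp add: poisson_op_def inner_vec_def right_diff_distrib sum_subtractf sum_distrib_left mult.assoc)
  also have "(\<Sum>x\<in>UNIV. \<Sum>y\<in>UNIV. pst x * P x y * g$y) = (\<Sum>y\<in>UNIV. pst y * g$y)"
    by (subst sum.swap) (simp only: sum_distrib_right[symmetric] stat)
  finally show ?thesis by simp
qed

lemma inj_on_poisson_op:
  assumes sto: "stochastic_matrix P" and irr: "irreducible_chain P"
  shows "inj_on (poisson_op P) {g. g$x0 = 0}"
proof (rule inj_onI)
  fix g h assume "g \<in> {g. g$x0 = 0}" "h \<in> {g. g$x0 = 0}" and eq: "poisson_op P g = poisson_op P h"
  then have at_x0: "(g - h)$x0 = 0" by simp
  have "poisson_op P (g - h) = 0"
    by (simp add: linear_diff[OF linear_poisson_op] eq)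
  then have "(poisson_op P (g - h))$x = 0" for x
    by (simp only: zero_index)
  then have kernel: "(g - h)$x - (\<Sum>y\<in>UNIV. P x y * (g - h)$y) = 0" for x
    by (simp only: poisson_op_def vec_lambda_beta)
  have "(g - h)$x = (\<Sum>y\<in>UNIV. P x y * (g - h)$y)" for x
    using kernel[of x] by linarith
  then have "(g - h)$x = (g - h)$x0" for x
    by (rule harmonic_function_const[OF sto irr])
  then have "g$x = h$x" for x
    using at_x0 by simp
  then show "g = h" by (simp add: vec_eq_iff)
qed

lemma stationary_vector_nonzero:
  assumes "stationary_dist P pst"
  shows "(\<chi> x. pst x) \<noteq> (0::real^'s::finite)"
proof -
  have "(\<Sum>x\<in>UNIV. pst x) = 1"
    using assms unfolding stationary_dist_def by blast
  then obtain x1 where "pst x1 \<noteq> 0"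
    by (metis sum.neutral zero_neq_one)
  then show ?thesis
    by (metis vec_lambda_beta zero_index)
qed

text \<open>The image of the hyperplane g $ x0 = 0 is contained in the hyperplane orthogonal to
  pst and has the same dimension, so it is all of it.\<close>
lemma poisson_equation_solvable:
  fixes P :: "'s::finite \<Rightarrow> 's \<Rightarrow> real" and pst v :: "'s \<Rightarrow> real"
  assumes sto: "stochastic_matrix P" and irr: "irreducible_chain P"
    and st: "stationary_dist P pst" and centered: "(\<Sum>x\<in>UNIV. pst x * v x) = 0"
  obtains g where "\<And>x. g x - (\<Sum>y\<in>UNIV. P x y * g y) = v x"
proof -
  fix x0 :: 's
  define H0 where "H0 = {g::real^'s. axis x0 1 \<bullet> g = 0}"
  define H where "H = {w::real^'s. (\<chi> x. pst x) \<bullet> w = 0}"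
  have dim_H: "dim H = CARD('s) - 1"
    unfolding H_def using stationary_vector_nonzero[OF st] by (subst dim_hyperplane) simp_all
  have dim_H0: "dim H0 = CARD('s) - 1"
    unfolding H0_def by (subst dim_hyperplane) (simp_all add: axis_eq_0_iff)
  have H0_eq: "H0 = {g. g$x0 = 0}"
    unfolding H0_def by (simp add: inner_axis')
  have "span H0 = H0"
    unfolding H0_def by (rule span_eq_iff[THEN iffD2, OF subspace_hyperplane])
  then have "dim (poisson_op P ` H0) = dim H0"
    using inj_on_poisson_op[OF sto irr, of x0]
    by (intro dim_image_eq[OF linear_poisson_op]) (simp only: H0_eq)
  moreover have "poisson_op P ` H0 \<subseteq> H"
    unfolding H_def using stationary_orthogonal_poisson_op[OF st] by auto
  moreover have "subspace (poisson_op P ` H0)"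
    unfolding H0_def by (rule linear_subspace_image[OF linear_poisson_op subspace_hyperplane])
  moreover have "subspace H"
    unfolding H_def by (rule subspace_hyperplane)
  ultimately have "poisson_op P ` H0 = H"
    by (intro subspace_dim_equal) (simp_all add: dim_H dim_H0)
  moreover have "(\<chi> x. v x) \<in> H"
    using centered by (simp add: H_def inner_vec_def)
  ultimately obtain g where "(\<chi> x. v x) = poisson_op P g" by auto
  then have "(\<chi> x. v x)$x = (poisson_op P g)$x" for x
    by (rule arg_cong)
  then have "v x = g$x - (\<Sum>y\<in>UNIV. P x y * g$y)" for x
    by (simp only: poisson_op_def vec_lambda_beta)
  then show thesis
    by (intro that[of "\<lambda>x. g$x"]) simp
qed

subsection \<open>Averages along the squares\<close>

lemma abs_diff_le_of_bounded_increments: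
  fixes A :: "nat \<Rightarrow> real"
  assumes increments: "\<And>n. \<bar>A (Suc n) - A n\<bar> \<le> B" and "m \<le> n"
  shows "\<bar>A n - A m\<bar> \<le> B * real (n - m)"
  using \<open>m \<le> n\<close>
proof (induction n rule: dec_induct)
  case base
  then show ?case by simp
next
  case (step n)
  have "\<bar>A (Suc n) - A m\<bar> \<le> \<bar>A (Suc n) - A n\<bar> + \<bar>A n - A m\<bar>"
    by simp
  also have "\<dots> \<le> B + B * real (n - m)"
    using increments step.IH by (rule add_mono)
  also have "\<dots> = B * real (Suc n - m)"
    using step.hyps by (simp add: Suc_diff_le algebra_simps)
  finally show ?case .
qed

lemma abs_divide_sub_divide_square_le:
  fixes a c N K B :: real
  assumes K_ge_1: "K \<ge> 1" and N_lower: "K^2 \<le> N" and N_upper: "N \<le> K^2 + 2*K"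
    and close: "\<bar>a - c\<bar> \<le> 2*B*K" and small: "\<bar>c\<bar> \<le> B*K^2"
  shows "\<bar>a/N - c/K^2\<bar> \<le> 4*B/K"
proof -
  have K_pos: "K > 0" using K_ge_1 by simp
  have N_pos: "N > 0" using N_lower K_pos by (smt (verit) zero_less_power)
  have "0 \<le> B*K^2" using small by (meson abs_ge_zero order_trans)
  then have B_nonneg: "B \<ge> 0" using K_pos by (simp add: zero_le_mult_iff)
  have "\<bar>(a - c)*K^2 + c*(K^2 - N)\<bar> \<le> \<bar>(a - c)*K^2\<bar> + \<bar>c*(K^2 - N)\<bar>"
    by (rule abs_triangle_ineq)
  also have "\<dots> = \<bar>a - c\<bar>*K^2 + \<bar>c\<bar>*(N - K^2)"
    using N_lower by (simp add: abs_mult abs_of_nonpos)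
  also have "\<dots> \<le> (2*B*K)*K^2 + (B*K^2)*(2*K)"
    by (intro add_mono mult_mono close small) (use N_lower N_upper B_nonneg K_pos in auto)
  also have "\<dots> = 4*B*K * K^2" by (simp add: algebra_simps)
  finally have numerator: "\<bar>(a - c)*K^2 + c*(K^2 - N)\<bar> \<le> 4*B*K * K^2" .
  have "a/N - c/K^2 = ((a - c)*K^2 + c*(K^2 - N))/(N*K^2)"
    using K_pos N_pos by (simp add: field_simps)
  then have "\<bar>a/N - c/K^2\<bar> = \<bar>(a - c)*K^2 + c*(K^2 - N)\<bar> / (N*K^2)"
    using N_pos K_pos by (simp add: abs_divide abs_mult)
  also have "\<dots> \<le> 4*B*K * K^2 / (N*K^2)"
    by (rule divide_right_mono[OF numerator]) (use N_pos K_pos in simp)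
  also have "\<dots> = 4*B*K / N" using K_pos by simp
  also have "\<dots> \<le> 4*B*K / K^2"
    by (rule divide_left_mono) (use B_nonneg K_pos N_lower N_pos in auto)
  also have "\<dots> = 4*B/K" using K_pos by (simp add: power2_eq_square)
  finally show ?thesis .
qed

lemma LIMSEQ_div_from_squares:
  fixes A :: "nat \<Rightarrow> real"
  assumes increments: "\<And>n. \<bar>A (Suc n) - A n\<bar> \<le> B" and A0: "A 0 = 0"
    and squares: "(\<lambda>k. A ((Suc k)^2) / real ((Suc k)^2)) \<longlonglongrightarrow> 0"
  shows "(\<lambda>n. A n / real n) \<longlonglongrightarrow> 0"
proof -
  define r where "r n = floor_sqrt n" for n
  have r_top: "filterlim r at_top sequentially"
    unfolding filterlim_at_top eventually_sequentially
    by (metis le_floor_sqrtI order_trans power2_nat_le_imp_le r_def le_refl)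
  have "(\<lambda>k. A (k^2) / real (k^2)) \<longlonglongrightarrow> 0"
    by (rule LIMSEQ_imp_Suc) (use squares in simp)
  then have at_squares: "(\<lambda>n. A ((r n)^2) / real ((r n)^2)) \<longlonglongrightarrow> 0"
    using filterlim_compose[OF _ r_top] by (simp add: o_def)
  have "filterlim (\<lambda>n. real (r n)) at_infinity sequentially"
    by (rule filterlim_at_top_imp_at_infinity, rule filterlim_compose[OF filterlim_real_sequentially r_top])
  then have bound_tendsto_0: "(\<lambda>n. 4*B / real (r n)) \<longlonglongrightarrow> 0"
    by (rule tendsto_divide_0[OF tendsto_const])
  have "\<bar>A n / real n - A ((r n)^2) / real ((r n)^2)\<bar> \<le> 4*B / real (r n)" if "n \<ge> 1" for n
  proof -
    define k where "k = r n"
    have "k \<ge> 1" using \<open>n \<ge> 1\<close> unfolding k_def r_def by (simp add: Suc_le_eq)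
    have "k^2 \<le> n" unfolding k_def r_def by simp
    have "n < (Suc k)^2" unfolding k_def r_def by (rule Suc_floor_sqrt_power2_gt)
    then have "n \<le> k^2 + 2*k" by (simp add: power2_eq_square)
    have B_nonneg: "0 \<le> B" by (meson abs_ge_zero order_trans increments)
    have "\<bar>A n - A (k^2)\<bar> \<le> B * real (n - k^2)"
      using abs_diff_le_of_bounded_increments[where A = A, OF increments \<open>k^2 \<le> n\<close>] .
    also have "\<dots> \<le> B * real (2*k)"
      using \<open>n \<le> k^2 + 2*k\<close> B_nonneg by (intro mult_left_mono) simp_all
    finally have "\<bar>A n - A (k^2)\<bar> \<le> 2*B*real k" by simp
    moreover have "\<bar>A (k^2)\<bar> \<le> B * (real k)^2"
      using abs_diff_le_of_bounded_increments[where A = A, OF increments, of 0 "k^2"] A0 by simp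
    ultimately have "\<bar>A n / real n - A (k^2) / (real k)^2\<bar> \<le> 4*B/real k"
      using \<open>k \<ge> 1\<close> \<open>k^2 \<le> n\<close> \<open>n \<le> k^2 + 2*k\<close>
      by (intro abs_divide_sub_divide_square_le) (auto simp: of_nat_power[symmetric] simp del: of_nat_power)
    then show ?thesis unfolding k_def by simp
  qed
  then have "(\<lambda>n. A n / real n - A ((r n)^2) / real ((r n)^2)) \<longlonglongrightarrow> 0"
    by (intro Lim_null_comparison[OF _ bound_tendsto_0]) (auto simp: eventually_sequentially)
  from tendsto_add[OF this at_squares] show ?thesis
    by simp
qed

lemma LIMSEQ_average_telescoping:
  fixes F D G :: "nat \<Rightarrow> real"
  assumes decomposition: "\<And>n. F n = D n + real n * mu + (G 0 - G n)"
    and G_bounded: "\<And>n. \<bar>G n\<bar> \<le> K" and D_average: "(\<lambda>n. D n / real n) \<longlonglongrightarrow> 0"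
  shows "(\<lambda>n. F n / real n) \<longlonglongrightarrow> mu"
proof -
  have "(\<lambda>n. (G 0 - G n) / real n) \<longlonglongrightarrow> 0"
  proof (rule Lim_null_comparison)
    have "\<bar>G 0 - G n\<bar> \<le> 2 * K" for n
      using G_bounded[of 0] G_bounded[of n] by linarith
    then show "\<forall>\<^sub>F n in sequentially. norm ((G 0 - G n) / real n) \<le> 2 * K / real n"
      by (intro always_eventually allI) (simp add: abs_divide divide_right_mono)
    show "(\<lambda>n. 2 * K / real n) \<longlonglongrightarrow> 0"
      by (rule lim_const_over_n)
  qed
  then have "(\<lambda>n. D n / real n + mu + (G 0 - G n) / real n) \<longlonglongrightarrow> 0 + mu + 0"
    by (intro tendsto_add D_average tendsto_const)
  moreover have "\<forall>\<^sub>F n in sequentially. D n / real n + mu + (G 0 - G n) / real n = F n / real n"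
    using eventually_gt_at_top[of 0]
    by eventually_elim (simp add: decomposition add_divide_distrib)
  ultimately show ?thesis
    by (simp add: Lim_transform_eventually)
qed

subsection \<open>The access process\<close>

lemma AE_summable_of_summable_integral:
  fixes Z :: "nat \<Rightarrow> 'a \<Rightarrow> real"
  assumes integrable: "\<And>k. integrable M (Z k)" and nonneg: "\<And>k x. 0 \<le> Z k x"
    and summable: "summable (\<lambda>k. integral\<^sup>L M (Z k))"
  shows "AE x in M. summable (\<lambda>k. Z k x)"
proof -
  have [measurable]: "Z k \<in> borel_measurable M" for k
    using integrable by auto
  have "(\<integral>\<^sup>+x. (\<Sum>k. ennreal (Z k x)) \<partial>M) = (\<Sum>k. \<integral>\<^sup>+x. ennreal (Z k x) \<partial>M)"
    by (rule nn_integral_suminf) measurable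
  also have "\<dots> = (\<Sum>k. ennreal (integral\<^sup>L M (Z k)))"
    by (subst nn_integral_eq_integral[OF integrable]) (auto simp: nonneg)
  also have "\<dots> = ennreal (\<Sum>k. integral\<^sup>L M (Z k))"
    by (rule suminf_ennreal2[OF _ summable]) (simp add: integral_nonneg_AE nonneg)
  finally have "(\<integral>\<^sup>+x. (\<Sum>k. ennreal (Z k x)) \<partial>M) \<noteq> \<infinity>"
    by simp
  then have "AE x in M. (\<Sum>k. ennreal (Z k x)) \<noteq> \<infinity>"
    by (intro nn_integral_PInf_AE) measurable
  then show ?thesis
    by eventually_elim (intro summable_suminf_not_top nonneg, simp)
qed

lemma (in finite_measure) integral_finite_range:
  assumes "finite S" "\<And>\<omega>. \<omega> \<in> space M \<Longrightarrow> W \<omega> \<in> S"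
    "\<And>v. v \<in> S \<Longrightarrow> {\<omega>\<in>space M. W \<omega> = v} \<in> sets M"
  shows "integral\<^sup>L M (\<lambda>\<omega>. F (W \<omega>) :: real) = (\<Sum>v\<in>S. F v * measure M {\<omega>\<in>space M. W \<omega> = v})"
proof -
  have "integral\<^sup>L M (\<lambda>\<omega>. F (W \<omega>))
      = integral\<^sup>L M (\<lambda>\<omega>. \<Sum>v\<in>S. F v * indicator {\<omega>\<in>space M. W \<omega> = v} \<omega>)"
    using assms(1,2) by (intro Bochner_Integration.integral_cong) (simp_all add: indicator_def sum.delta)
  also have "\<dots> = (\<Sum>v\<in>S. integral\<^sup>L M (\<lambda>\<omega>. F v * indicator {\<omega>\<in>space M. W \<omega> = v} \<omega>))"
    by (rule Bochner_Integration.integral_sum)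
      (auto intro!: integrable_real_indicator assms(3) simp: less_top[symmetric])
  also have "\<dots> = (\<Sum>v\<in>S. F v * measure M {\<omega>\<in>space M. W \<omega> = v})"
    by (rule sum.cong) (auto simp: Int_absorb2)
  finally show ?thesis .
qed

locale access_chain = prob_space M for M :: "'w measure" +
  fixes P :: "'s::finite \<Rightarrow> 's \<Rightarrow> real" and q :: "'s \<Rightarrow> 'c::finite \<Rightarrow> real"
    and X :: "nat \<Rightarrow> 'w \<Rightarrow> 's" and Ch :: "nat \<Rightarrow> 'w \<Rightarrow> 'c"
  assumes stochastic: "stochastic_matrix P"
    and q_sum: "\<And>s. (\<Sum>a\<in>UNIV. q s a) = 1" and access: "access_process M P q X Ch"
begin

lemma measurable_X [measurable]: "X n \<in> measurable M (count_space UNIV)"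
  and measurable_Ch [measurable]: "Ch n \<in> measurable M (count_space UNIV)"
  using access unfolding access_process_def by auto

definition init_prob :: "'s \<Rightarrow> real" where
  "init_prob x = measure M {\<omega>\<in>space M. X 0 \<omega> = x}"

definition path_weight :: "nat \<Rightarrow> (nat \<Rightarrow> 's) \<Rightarrow> (nat \<Rightarrow> 'c) \<Rightarrow> real" where
  "path_weight n s a = (\<Prod>k<n. q (s k) (a k) * P (s k) (s (Suc k)))"

lemma measure_cylinder:
  "measure M {\<omega>\<in>space M. \<forall>k\<le>n. X k \<omega> = s k \<and> Ch k \<omega> = a k}
   = init_prob (s 0) * path_weight n s a * q (s n) (a n)"
  using access unfolding access_process_def init_prob_def path_weight_def by auto

text \<open>Marginalising the last channel, whose probabilities sum to one.\<close>
lemma measure_cylinder_states: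
  "measure M {\<omega>\<in>space M. \<forall>k\<le>n. X k \<omega> = s k \<and> (k < n \<longrightarrow> Ch k \<omega> = a k)}
   = init_prob (s 0) * path_weight n s a"
proof -
  let ?A = "\<lambda>b. {\<omega>\<in>space M. \<forall>k\<le>n. X k \<omega> = s k \<and> Ch k \<omega> = (a(n:=b)) k}"
  have "{\<omega>\<in>space M. \<forall>k\<le>n. X k \<omega> = s k \<and> (k < n \<longrightarrow> Ch k \<omega> = a k)} = (\<Union>b. ?A b)"
    by (auto simp: less_le)
  then have "measure M {\<omega>\<in>space M. \<forall>k\<le>n. X k \<omega> = s k \<and> (k < n \<longrightarrow> Ch k \<omega> = a k)}
      = (\<Sum>b\<in>UNIV. measure M (?A b))"
    by (simp only:) (rule measure_finite_Union, auto simp: disjoint_family_on_def)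
  also have "\<dots> = (\<Sum>b\<in>UNIV. init_prob (s 0) * path_weight n s a * q (s n) b)"
  proof (rule sum.cong[OF refl])
    fix b
    have "path_weight n s (a(n:=b)) = path_weight n s a"
      unfolding path_weight_def by (rule prod.cong) auto
    then show "measure M (?A b) = init_prob (s 0) * path_weight n s a * q (s n) b"
      by (subst measure_cylinder) simp
  qed
  also have "\<dots> = init_prob (s 0) * path_weight n s a"
    by (simp add: sum_distrib_left[symmetric] q_sum)
  finally show ?thesis .
qed

definition history :: "nat \<Rightarrow> 'w \<Rightarrow> (nat \<Rightarrow> 's) \<times> (nat \<Rightarrow> 'c)" where
  "history t \<omega> = (restrict (\<lambda>k. X k \<omega>) {..t}, restrict (\<lambda>k. Ch k \<omega>) {..<t})"

definition histories :: "nat \<Rightarrow> ((nat \<Rightarrow> 's) \<times> (nat \<Rightarrow> 'c)) set" where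
  "histories t = PiE {..t} (\<lambda>_. UNIV) \<times> PiE {..<t} (\<lambda>_. UNIV)"

lemma finite_histories: "finite (histories t)"
  unfolding histories_def by (auto intro!: finite_PiE)

lemma history_in_histories: "history t \<omega> \<in> histories t"
  unfolding history_def histories_def by auto

lemma history_step_event:
  assumes "(sv, av) \<in> histories t"
  shows "{\<omega>\<in>space M. (history t \<omega>, Ch t \<omega>, X (Suc t) \<omega>) = ((sv, av), b, y)}
    = {\<omega>\<in>space M. \<forall>k\<le>Suc t. X k \<omega> = (sv(Suc t:=y)) k \<and> (k < Suc t \<longrightarrow> Ch k \<omega> = (av(t:=b)) k)}"
proof -
  have "sv \<in> extensional {..t}" "av \<in> extensional {..<t}"
    using assms unfolding histories_def by (auto simp: PiE_def)
  then show ?thesis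
    unfolding history_def by (auto simp: restrict_def extensional_def fun_eq_iff le_Suc_eq less_Suc_eq)
qed

lemma measure_history_step:
  assumes "(sv, av) \<in> histories t"
  shows "measure M {\<omega>\<in>space M. (history t \<omega>, Ch t \<omega>, X (Suc t) \<omega>) = ((sv, av), b, y)}
    = init_prob (sv 0) * path_weight t sv av * (q (sv t) b * P (sv t) y)"
proof -
  have "path_weight (Suc t) (sv(Suc t:=y)) (av(t:=b)) = path_weight t sv av * (q (sv t) b * P (sv t) y)"
  proof -
    have "(\<Prod>k<t. q ((sv(Suc t:=y)) k) ((av(t:=b)) k) * P ((sv(Suc t:=y)) k) ((sv(Suc t:=y)) (Suc k)))
        = (\<Prod>k<t. q (sv k) (av k) * P (sv k) (sv (Suc k)))"
      by (rule prod.cong) auto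
    then show ?thesis unfolding path_weight_def by simp
  qed
  then show ?thesis
    by (simp only: history_step_event[OF assms] measure_cylinder_states) simp
qed

text \<open>Conditionally on the history up to time t, a centred increment at time t has mean zero,
  and everything at an earlier time is a function of that history.\<close>
lemma integral_increments_orthogonal:
  assumes "u < t" and centered: "\<And>x. (\<Sum>b\<in>UNIV. \<Sum>y\<in>UNIV. q x b * P x y * \<phi> x b y) = 0"
  shows "integral\<^sup>L M (\<lambda>\<omega>. \<psi> (X u \<omega>) (Ch u \<omega>) (X (Suc u) \<omega>) * \<phi> (X t \<omega>) (Ch t \<omega>) (X (Suc t) \<omega>) :: real) = 0"
proof -
  define W where "W \<omega> = (history t \<omega>, Ch t \<omega>, X (Suc t) \<omega>)" for \<omega>
  define F where "F = (\<lambda>((sv, av), b, y). \<psi> (sv u) (av u) (sv (Suc u)) * \<phi> (sv t) b y)"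
  have "integral\<^sup>L M (\<lambda>\<omega>. \<psi> (X u \<omega>) (Ch u \<omega>) (X (Suc u) \<omega>) * \<phi> (X t \<omega>) (Ch t \<omega>) (X (Suc t) \<omega>))
      = integral\<^sup>L M (\<lambda>\<omega>. F (W \<omega>))"
    using \<open>u < t\<close> by (simp add: F_def W_def history_def)
  also have "\<dots> = (\<Sum>v\<in>histories t \<times> UNIV \<times> UNIV. F v * measure M {\<omega>\<in>space M. W \<omega> = v})"
  proof (rule integral_finite_range)
    show "finite (histories t \<times> (UNIV::'c set) \<times> (UNIV::'s set))"
      using finite_histories by simp
    show "W \<omega> \<in> histories t \<times> UNIV \<times> UNIV" for \<omega>
      unfolding W_def using history_in_histories by simp
    fix v assume "v \<in> histories t \<times> (UNIV::'c set) \<times> (UNIV::'s set)"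
    then obtain sv av b y where v: "v = ((sv, av), b, y)" "(sv, av) \<in> histories t" by auto
    show "{\<omega>\<in>space M. W \<omega> = v} \<in> sets M"
      unfolding v(1) W_def history_step_event[OF v(2)] by measurable
  qed
  also have "\<dots> = (\<Sum>h\<in>histories t. \<Sum>b\<in>UNIV. \<Sum>y\<in>UNIV. F (h, b, y) * measure M {\<omega>\<in>space M. W \<omega> = (h, b, y)})"
    using finite_histories by (simp add: sum.cartesian_product)
  also have "\<dots> = (\<Sum>h\<in>histories t. 0)"
  proof (rule sum.cong[OF refl])
    fix h assume h: "h \<in> histories t"
    obtain sv av where sv_av: "h = (sv, av)" by fastforce
    have "(\<Sum>b\<in>UNIV. \<Sum>y\<in>UNIV. F (h, b, y) * measure M {\<omega>\<in>space M. W \<omega> = (h, b, y)})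
        = \<psi> (sv u) (av u) (sv (Suc u)) * init_prob (sv 0) * path_weight t sv av
          * (\<Sum>b\<in>UNIV. \<Sum>y\<in>UNIV. q (sv t) b * P (sv t) y * \<phi> (sv t) b y)"
      using h unfolding sv_av W_def F_def
      by (simp only: measure_history_step case_prod_conv) (simp add: sum_distrib_left mult_ac)
    also have "\<dots> = 0"
      using centered by simp
    finally show "(\<Sum>b\<in>UNIV. \<Sum>y\<in>UNIV. F (h, b, y) * measure M {\<omega>\<in>space M. W \<omega> = (h, b, y)}) = 0" .
  qed
  finally show ?thesis by simp
qed

lemma integral_increments_product_le:
  assumes centered: "\<And>x. (\<Sum>b\<in>UNIV. \<Sum>y\<in>UNIV. q x b * P x y * \<phi> x b y) = 0"
    and bounded: "\<And>x b y. \<bar>\<phi> x b y\<bar> \<le> B"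
  shows "integral\<^sup>L M (\<lambda>\<omega>. \<phi> (X s \<omega>) (Ch s \<omega>) (X (Suc s) \<omega>) * \<phi> (X t \<omega>) (Ch t \<omega>) (X (Suc t) \<omega>))
    \<le> (if s = t then B^2 else 0)"
proof (cases "s = t")
  case True
  have B_nonneg: "0 \<le> B"
    using bounded by (meson abs_ge_zero order_trans)
  have "\<phi> x b y * \<phi> x b y \<le> B^2" for x b y
    using mult_mono[OF bounded bounded B_nonneg abs_ge_zero, of x b y x b y]
    by (simp add: power2_eq_square)
  then have "integral\<^sup>L M (\<lambda>\<omega>. \<phi> (X t \<omega>) (Ch t \<omega>) (X (Suc t) \<omega>) * \<phi> (X t \<omega>) (Ch t \<omega>) (X (Suc t) \<omega>))
      \<le> integral\<^sup>L M (\<lambda>\<omega>. B^2)"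
    by (intro integral_mono integrable_const integrable_const_bound[where B="B^2"]) auto
  then show ?thesis
    using True by (simp add: prob_space)
next
  case False
  then consider "s < t" | "t < s" by linarith
  then show ?thesis
  proof cases
    case 1
    then show ?thesis
      using integral_increments_orthogonal[OF _ centered] False by simp
  next
    case 2
    then show ?thesis
      using integral_increments_orthogonal[OF _ centered, of t s \<phi>] False by (simp add: mult.commute)
  qed
qed

lemma integral_square_sum_increments_le:
  assumes centered: "\<And>x. (\<Sum>b\<in>UNIV. \<Sum>y\<in>UNIV. q x b * P x y * \<phi> x b y) = 0"
    and bounded: "\<And>x b y. \<bar>\<phi> x b y\<bar> \<le> B"
  shows "integral\<^sup>L M (\<lambda>\<omega>. (\<Sum>t<n. \<phi> (X t \<omega>) (Ch t \<omega>) (X (Suc t) \<omega>))^2) \<le> real n * B^2"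
proof -
  define D where "D t \<omega> = \<phi> (X t \<omega>) (Ch t \<omega>) (X (Suc t) \<omega>)" for t \<omega>
  have integrable: "integrable M (\<lambda>\<omega>. D s \<omega> * D t \<omega>)" for s t
    unfolding D_def using bounded
    by (intro integrable_const_bound[where B="B*B"]) (auto simp: abs_mult intro!: mult_mono order_trans[OF abs_ge_zero bounded])
  have "integral\<^sup>L M (\<lambda>\<omega>. (\<Sum>t<n. D t \<omega>)^2) = (\<Sum>s<n. \<Sum>t<n. integral\<^sup>L M (\<lambda>\<omega>. D s \<omega> * D t \<omega>))"
    by (simp add: power2_eq_square sum_product Bochner_Integration.integral_sum
        Bochner_Integration.integrable_sum integrable)
  also have "\<dots> \<le> (\<Sum>s<n. \<Sum>t<n. (if s = t then B^2 else 0))"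
    unfolding D_def by (intro sum_mono integral_increments_product_le[OF centered bounded])
  also have "\<dots> = real n * B^2"
    by simp
  finally show ?thesis
    by (simp only: D_def)
qed

lemma abs_average_increments_le:
  assumes bounded: "\<And>x b y. \<bar>\<phi> x b y\<bar> \<le> B"
  shows "\<bar>(\<Sum>t<n. \<phi> (X t \<omega>) (Ch t \<omega>) (X (Suc t) \<omega>)) / real n\<bar> \<le> B"
proof -
  have "\<bar>\<Sum>t<n. \<phi> (X t \<omega>) (Ch t \<omega>) (X (Suc t) \<omega>)\<bar> \<le> (\<Sum>t<n. \<bar>\<phi> (X t \<omega>) (Ch t \<omega>) (X (Suc t) \<omega>)\<bar>)"
    by (rule sum_abs)
  also have "\<dots> \<le> real n * B"
    using sum_mono[of "{..<n}", OF bounded] by simp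
  finally show ?thesis
    using order_trans[OF abs_ge_zero bounded]
    by (cases "n = 0") (simp_all add: abs_divide divide_le_eq mult.commute)
qed

lemma integral_square_average_increments_le:
  assumes centered: "\<And>x. (\<Sum>b\<in>UNIV. \<Sum>y\<in>UNIV. q x b * P x y * \<phi> x b y) = 0"
    and bounded: "\<And>x b y. \<bar>\<phi> x b y\<bar> \<le> B" and "n > 0"
  shows "integral\<^sup>L M (\<lambda>\<omega>. ((\<Sum>t<n. \<phi> (X t \<omega>) (Ch t \<omega>) (X (Suc t) \<omega>)) / real n)^2) \<le> B^2 / real n"
proof -
  have "integral\<^sup>L M (\<lambda>\<omega>. ((\<Sum>t<n. \<phi> (X t \<omega>) (Ch t \<omega>) (X (Suc t) \<omega>)) / real n)^2)
      = integral\<^sup>L M (\<lambda>\<omega>. (\<Sum>t<n. \<phi> (X t \<omega>) (Ch t \<omega>) (X (Suc t) \<omega>))^2) / (real n)^2"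
    by (simp add: power_divide)
  also have "\<dots> \<le> (real n * B^2) / (real n)^2"
    by (intro divide_right_mono integral_square_sum_increments_le[OF centered bounded]) simp
  also have "\<dots> = B^2 / real n"
    using \<open>n > 0\<close> by (simp add: power2_eq_square)
  finally show ?thesis .
qed

text \<open>A strong law of large numbers for bounded martingale differences: along n = k^2 the mean
  squares of the averages are summable, and bounded increments fill the gaps.\<close>
lemma AE_average_increments_tendsto_0:
  assumes centered: "\<And>x. (\<Sum>b\<in>UNIV. \<Sum>y\<in>UNIV. q x b * P x y * \<phi> x b y) = 0"
    and bounded: "\<And>x b y. \<bar>\<phi> x b y\<bar> \<le> B"
  shows "AE \<omega> in M. (\<lambda>n. (\<Sum>t<n. \<phi> (X t \<omega>) (Ch t \<omega>) (X (Suc t) \<omega>)) / real n) \<longlonglongrightarrow> 0"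
proof -
  define S where "S n \<omega> = (\<Sum>t<n. \<phi> (X t \<omega>) (Ch t \<omega>) (X (Suc t) \<omega>))" for n \<omega>
  define Z where "Z k \<omega> = (S ((Suc k)^2) \<omega> / real ((Suc k)^2))^2" for k \<omega>
  have [measurable]: "Z k \<in> borel_measurable M" for k
    unfolding Z_def S_def by measurable
  have "\<bar>Z k \<omega>\<bar> \<le> B^2" for k \<omega>
  proof -
    have "\<bar>S ((Suc k)^2) \<omega> / real ((Suc k)^2)\<bar> \<le> B"
      unfolding S_def by (rule abs_average_increments_le[OF bounded])
    then have "\<bar>S ((Suc k)^2) \<omega> / real ((Suc k)^2)\<bar>^2 \<le> B^2"
      by (rule power_mono) simp
    then show ?thesis
      unfolding Z_def by (simp only: power2_abs abs_power2)
  qed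
  then have integrable_Z: "integrable M (Z k)" for k
    by (intro integrable_const_bound[where B="B^2"]) auto
  have "integral\<^sup>L M (Z k) \<le> B^2 / real ((Suc k)^2)" for k
    unfolding Z_def S_def by (rule integral_square_average_increments_le[OF centered bounded]) simp
  moreover have "0 \<le> integral\<^sup>L M (Z k)" for k
    by (rule Bochner_Integration.integral_nonneg) (simp add: Z_def)
  ultimately have norm_integral_Z_le: "norm (integral\<^sup>L M (Z k)) \<le> B^2 / real ((Suc k)^2)" for k
    by simp
  have "summable (\<lambda>k. inverse (real k ^ 2))"
    by (rule inverse_power_summable) simp
  then have "summable (\<lambda>k. B^2 * inverse (real (Suc k) ^ 2))"
    by (subst (asm) summable_Suc_iff[symmetric]) (rule summable_mult)
  then have "summable (\<lambda>k. B^2 / real ((Suc k)^2))"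
    by (simp add: divide_inverse del: of_nat_Suc)
  then have "summable (\<lambda>k. integral\<^sup>L M (Z k))"
    by (rule summable_comparison_test'[OF _ norm_integral_Z_le])
  then have "AE \<omega> in M. summable (\<lambda>k. Z k \<omega>)"
    by (intro AE_summable_of_summable_integral integrable_Z) (simp add: Z_def)
  then show ?thesis
  proof eventually_elim
    case (elim \<omega>)
    then have "(\<lambda>k. sqrt (Z k \<omega>)) \<longlonglongrightarrow> sqrt 0"
      by (intro tendsto_real_sqrt summable_LIMSEQ_zero)
    then have "(\<lambda>k. \<bar>S ((Suc k)^2) \<omega> / real ((Suc k)^2)\<bar>) \<longlonglongrightarrow> 0"
      by (simp add: Z_def del: of_nat_Suc of_nat_power)
    then have "(\<lambda>k. S ((Suc k)^2) \<omega> / real ((Suc k)^2)) \<longlonglongrightarrow> 0"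
      by (simp only: tendsto_rabs_zero_iff)
    then have "(\<lambda>n. S n \<omega> / real n) \<longlonglongrightarrow> 0"
      by (intro LIMSEQ_div_from_squares[where B=B]) (auto simp: S_def bounded)
    then show ?case
      by (simp add: S_def)
  qed
qed

lemma centered_poisson_increment:
  assumes poisson: "\<And>x. g x - (\<Sum>y\<in>UNIV. P x y * g y) = h x - mu"
    and mean_reward: "\<And>x. h x = (\<Sum>a\<in>UNIV. \<Sum>y\<in>UNIV. q x a * P x y * f x a y)"
  shows "(\<Sum>b\<in>UNIV. \<Sum>y\<in>UNIV. q x b * P x y * (f x b y - mu + g y - g x)) = 0"
proof -
  define c where "c = (\<Sum>y\<in>UNIV. P x y * g y) - mu - g x"
  have "(\<Sum>y\<in>UNIV. P x y * (f x b y - mu + g y - g x))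
      = (\<Sum>y\<in>UNIV. P x y * f x b y) - (\<Sum>y\<in>UNIV. P x y) * mu + (\<Sum>y\<in>UNIV. P x y * g y) - (\<Sum>y\<in>UNIV. P x y) * g x" for b
    by (simp only: right_diff_distrib distrib_left sum.distrib sum_subtractf sum_distrib_right)
  moreover have "(\<Sum>y\<in>UNIV. P x y) = 1"
    using stochastic unfolding stochastic_matrix_def by blast
  ultimately have row: "(\<Sum>y\<in>UNIV. P x y * (f x b y - mu + g y - g x)) = (\<Sum>y\<in>UNIV. P x y * f x b y) + c" for b
    unfolding c_def by simp
  have "(\<Sum>b\<in>UNIV. \<Sum>y\<in>UNIV. q x b * P x y * (f x b y - mu + g y - g x))
      = (\<Sum>b\<in>UNIV. q x b * (\<Sum>y\<in>UNIV. P x y * f x b y) + q x b * c)"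
    by (simp only: mult.assoc sum_distrib_left[symmetric] row distrib_left)
  also have "\<dots> = h x + c"
    by (simp only: sum.distrib sum_distrib_right[symmetric] q_sum mean_reward sum_distrib_left mult.assoc mult_1)
  also have "\<dots> = 0"
    using poisson[of x] unfolding c_def by simp
  finally show ?thesis .
qed

lemma AE_average_reward_tendsto:
  assumes irr: "irreducible_chain P" and st: "stationary_dist P pst"
  shows "AE \<omega> in M. (\<lambda>n. (\<Sum>t<n. f (X t \<omega>) (Ch t \<omega>) (X (Suc t) \<omega>)) / real n) \<longlonglongrightarrow>
     (\<Sum>x\<in>UNIV. pst x * (\<Sum>a\<in>UNIV. \<Sum>y\<in>UNIV. q x a * P x y * f x a y))"
proof -
  define h where "h x = (\<Sum>a\<in>UNIV. \<Sum>y\<in>UNIV. q x a * P x y * f x a y)" for x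
  define mu where "mu = (\<Sum>x\<in>UNIV. pst x * h x)"
  have "(\<Sum>x\<in>UNIV. pst x) = 1"
    using st unfolding stationary_dist_def by blast
  then have "(\<Sum>x\<in>UNIV. pst x * (h x - mu)) = 0"
    by (simp add: mu_def right_diff_distrib sum_subtractf sum_distrib_right[symmetric])
  then obtain g where poisson: "\<And>x. g x - (\<Sum>y\<in>UNIV. P x y * g y) = h x - mu"
    using poisson_equation_solvable[OF stochastic irr st, of "\<lambda>x. h x - mu"] by blast
  define \<phi> where "\<phi> x a y = f x a y - mu + g y - g x" for x a y
  have centered: "(\<Sum>b\<in>UNIV. \<Sum>y\<in>UNIV. q x b * P x y * \<phi> x b y) = 0" for x
    unfolding \<phi>_def by (rule centered_poisson_increment[OF poisson h_def])
  define B where "B = Max (range (\<lambda>(x, a, y). \<bar>\<phi> x a y\<bar>))"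
  have bounded: "\<bar>\<phi> x a y\<bar> \<le> B" for x a y
    unfolding B_def by (rule Max_ge) (simp, rule rev_image_eqI[of "(x, a, y)"], simp_all)
  define K where "K = Max (range (\<lambda>x. \<bar>g x\<bar>))"
  have g_bounded: "\<bar>g x\<bar> \<le> K" for x
    unfolding K_def by (rule Max_ge) auto
  have "AE \<omega> in M. (\<lambda>n. (\<Sum>t<n. \<phi> (X t \<omega>) (Ch t \<omega>) (X (Suc t) \<omega>)) / real n) \<longlonglongrightarrow> 0"
    by (rule AE_average_increments_tendsto_0[OF centered bounded])
  then show ?thesis
  proof eventually_elim
    case (elim \<omega>)
    have "(\<Sum>t<n. f (X t \<omega>) (Ch t \<omega>) (X (Suc t) \<omega>))
        = (\<Sum>t<n. \<phi> (X t \<omega>) (Ch t \<omega>) (X (Suc t) \<omega>)) + real n * mu + (g (X 0 \<omega>) - g (X n \<omega>))" for n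
      by (induction n) (simp_all add: \<phi>_def algebra_simps)
    then have "(\<lambda>n. (\<Sum>t<n. f (X t \<omega>) (Ch t \<omega>) (X (Suc t) \<omega>)) / real n) \<longlonglongrightarrow> mu"
      by (rule LIMSEQ_average_telescoping[where G = "\<lambda>n. g (X n \<omega>)", OF _ g_bounded elim])
    then show ?case
      by (simp add: mu_def h_def)
  qed
qed

end

subsection \<open>The two access policies\<close>

lemma expected_reward_greedy:
  fixes p :: "'s::finite \<Rightarrow> real" and C :: "'c::finite \<Rightarrow> real"
  assumes idle: "idle j0 a0" and best: "\<And>a. idle j0 a \<Longrightarrow> C a \<le> C a0"
  shows "(\<Sum>a\<in>UNIV. \<Sum>y\<in>UNIV. of_bool (a = a0) * p y * (C a * of_bool (idle y a)))
    = Max (C ` {a. idle j0 a}) * (p j0 + (\<Sum>j\<in>UNIV - {j0}. p j * of_bool (idle j a0)))"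
proof -
  have "(\<Sum>a\<in>UNIV. \<Sum>y\<in>UNIV. of_bool (a = a0) * p y * (C a * of_bool (idle y a)))
      = (\<Sum>a\<in>UNIV. if a = a0 then (\<Sum>y\<in>UNIV. p y * (C a * of_bool (idle y a))) else 0)"
    by (intro sum.cong) auto
  also have "\<dots> = (\<Sum>y\<in>UNIV. p y * (C a0 * of_bool (idle y a0)))"
    by simp
  also have "\<dots> = C a0 * (\<Sum>y\<in>UNIV. p y * of_bool (idle y a0))"
    by (simp only: sum_distrib_left) (simp only: mult_ac)
  finally have reward: "(\<Sum>a\<in>UNIV. \<Sum>y\<in>UNIV. of_bool (a = a0) * p y * (C a * of_bool (idle y a)))
      = C a0 * (\<Sum>y\<in>UNIV. p y * of_bool (idle y a0))" .
  have "(\<Sum>y\<in>UNIV. p y * of_bool (idle y a0)) = p j0 + (\<Sum>j\<in>UNIV - {j0}. p j * of_bool (idle j a0))"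
    using idle by (subst sum.remove[of UNIV j0]) auto
  moreover have "Max (C ` {a. idle j0 a}) = C a0"
    using idle best by (intro Max_eqI) auto
  ultimately show ?thesis
    by (simp only: reward)
qed

text \<open>Since x / 0 = 0, the uniform formula over an empty set is the zero function, not a
  distribution.\<close>
lemma card_nonzero_of_uniform:
  assumes uniform: "\<And>a. r a = of_bool (A a) / real (card {a. A a})" and sum_one: "(\<Sum>a\<in>UNIV. r a) = 1"
  shows "card {a::'c::finite. A a} \<noteq> 0"
proof
  assume "card {a. A a} = 0"
  then have "r a = 0" for a
    by (simp add: uniform)
  with sum_one show False
    by simp
qed

lemma sum_of_bool_conj_eq_card:
  "(\<Sum>a\<in>(UNIV::'c::finite set). of_bool (A a) * of_bool (B a) :: real) = real (card ({a. A a} \<inter> {a. B a}))"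
  by (simp add: of_bool_conj[symmetric] Int_def)

lemma sum_split_overlap:
  fixes p :: "'s::finite \<Rightarrow> real"
  assumes "card {a::'c::finite. idle j0 a} \<noteq> 0"
  shows "(\<Sum>j\<in>UNIV. p j * real (card ({a. idle j a} \<inter> {a. idle j0 a})) / real (card {a::'c. idle j0 a}))
    = p j0 + (\<Sum>j\<in>UNIV - {j0}. p j * real (card ({a. idle j a} \<inter> {a. idle j0 a})) / real (card {a. idle j0 a}))"
  using assms by (simp add: sum.remove[of UNIV j0])

lemma expected_reward_uniform:
  fixes p :: "'s::finite \<Rightarrow> real"
  assumes "card {a::'c::finite. idle j0 a} \<noteq> 0"
  shows "(\<Sum>a\<in>(UNIV::'c set). \<Sum>y\<in>UNIV. of_bool (idle j0 a) / real (card {a. idle j0 a}) * p y * (c * of_bool (idle y a)))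
    = c * (p j0 + (\<Sum>j\<in>UNIV - {j0}. p j * real (card ({a. idle j a} \<inter> {a. idle j0 a})) / real (card {a. idle j0 a})))"
proof -
  have "(\<Sum>a\<in>UNIV. of_bool (idle j0 a) / real (card {a. idle j0 a}) * p y * (c * of_bool (idle y a)))
      = c * p y / real (card {a. idle j0 a}) * (\<Sum>a\<in>(UNIV::'c set). of_bool (idle y a) * of_bool (idle j0 a))" for y
    by (simp only: sum_distrib_left) (intro sum.cong refl, simp add: mult_ac)
  then have "(\<Sum>a\<in>UNIV. of_bool (idle j0 a) / real (card {a. idle j0 a}) * p y * (c * of_bool (idle y a)))
      = c * (p y * real (card ({a. idle y a} \<inter> {a. idle j0 a})) / real (card {a::'c. idle j0 a}))" for y
    by (simp only: sum_of_bool_conj_eq_card) simp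
  then show ?thesis
    by (subst sum.swap) (simp only: sum_distrib_left[symmetric] sum_split_overlap[where idle = idle, OF assms])
qed

lemma sum_split_overlap_of_bool:
  fixes p :: "'s::finite \<Rightarrow> real"
  assumes "card {a::'c::finite. idle j0 a} \<noteq> 0"
  shows "(\<Sum>j\<in>UNIV. w * p j * (\<Sum>a\<in>(UNIV::'c set). of_bool (idle j a) * of_bool (idle j0 a))
      / (\<Sum>a\<in>UNIV. of_bool (idle j0 a)))
    = w * (p j0 + (\<Sum>j\<in>UNIV - {j0}. p j * real (card ({a. idle j a} \<inter> {a. idle j0 a})) / real (card {a. idle j0 a})))"
proof -
  have "(\<Sum>a\<in>(UNIV::'c set). of_bool (idle j0 a)) = real (card {a. idle j0 a})"
    by simp
  then have "(\<Sum>j\<in>UNIV. w * p j * (\<Sum>a\<in>(UNIV::'c set). of_bool (idle j a) * of_bool (idle j0 a))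
      / (\<Sum>a\<in>UNIV. of_bool (idle j0 a)))
      = w * (\<Sum>j\<in>UNIV. p j * real (card ({a. idle j a} \<inter> {a. idle j0 a})) / real (card {a::'c. idle j0 a}))"
    by (simp only: sum_of_bool_conj_eq_card sum_distrib_left times_divide_eq_right mult.assoc)
  then show ?thesis
    by (simp only: sum_split_overlap[where idle = idle, OF assms])
qed

theorem corollary1:
  fixes M :: "'w measure"
    and P :: "'s::finite \<Rightarrow> 's \<Rightarrow> real"
    and pst :: "'s \<Rightarrow> real"
    and idle :: "'s \<Rightarrow> 'c::finite \<Rightarrow> bool"
    and C :: "'c \<Rightarrow> real"
    and m :: "'s \<Rightarrow> 's"
    and q :: "'s \<Rightarrow> 'c \<Rightarrow> real"
    and X :: "nat \<Rightarrow> 'w \<Rightarrow> 's"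
    and Ch :: "nat \<Rightarrow> 'w \<Rightarrow> 'c"
    and astar :: "'s \<Rightarrow> 'c"
    and c :: real
  assumes "prob_space M"
    and "stochastic_matrix P"
    and "irreducible_chain P"
    and "stationary_dist P pst"
    and m_max: "\<And>s j. P s j \<le> P s (m s)"
    and q_dist: "\<And>s a. 0 \<le> q s a"
    and q_supp: "\<And>s a. \<not> idle (m s) a \<Longrightarrow> q s a = 0"
    and q_sum: "\<And>s. (\<Sum>a\<in>UNIV. q s a) = 1"
    and "access_process M P q X Ch"
  shows
    "(((\<forall>s. idle (m s) (astar s) \<and> (\<forall>a. idle (m s) a \<longrightarrow> C a \<le> C (astar s))) \<and>
      (\<forall>s a. q s a = of_bool (a = astar s)))
     \<longrightarrow> (AE \<omega> in M. (avg_reward idle C X Ch \<omega>) \<longlonglongrightarrow>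
            (\<Sum>s\<in>UNIV. pst s * Max (C ` {a. idle (m s) a}) *
               (P s (m s) + (\<Sum>j\<in>UNIV - {m s}. P s j * of_bool (idle j (astar s)))))))
   \<and>
    (((\<forall>a. C a = c) \<and>
      (\<forall>s a. q s a = of_bool (idle (m s) a) / real (card {a. idle (m s) a})))
     \<longrightarrow> (AE \<omega> in M. (avg_reward idle C X Ch \<omega>) \<longlonglongrightarrow>
            c * (\<Sum>s\<in>UNIV. pst s * (P s (m s) + (\<Sum>j\<in>UNIV - {m s}. P s j *
                   real (card ({a. idle j a} \<inter> {a. idle (m s) a})) / real (card {a. idle (m s) a})))))
       \<and> c * (\<Sum>s\<in>UNIV. pst s * (P s (m s) + (\<Sum>j\<in>UNIV - {m s}. P s j *
                   real (card ({a. idle j a} \<inter> {a. idle (m s) a})) / real (card {a. idle (m s) a}))))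
         = c * (\<Sum>s\<in>UNIV. \<Sum>j\<in>UNIV. pst s * P s j *
                 (\<Sum>a\<in>UNIV. of_bool (idle j a) * of_bool (idle (m s) a))
                 / (\<Sum>a\<in>UNIV. of_bool (idle (m s) a))))"
proof -
  interpret access_chain M P q X Ch
    using assms(1,2,9) q_sum by (simp add: access_chain_def access_chain_axioms_def)
  define mean where "mean s = (\<Sum>a\<in>UNIV. \<Sum>y\<in>UNIV. q s a * P s y * (C a * of_bool (idle y a)))" for s
  have limit: "AE \<omega> in M. avg_reward idle C X Ch \<omega> \<longlonglongrightarrow> (\<Sum>s\<in>UNIV. pst s * mean s)"
    using AE_average_reward_tendsto[OF assms(3,4), of "\<lambda>_ a y. C a * of_bool (idle y a)"]
    unfolding avg_reward_def[abs_def] mean_def .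
  show ?thesis
  proof (intro conjI impI)
    assume greedy: "(\<forall>s. idle (m s) (astar s) \<and> (\<forall>a. idle (m s) a \<longrightarrow> C a \<le> C (astar s))) \<and>
      (\<forall>s a. q s a = of_bool (a = astar s))"
    then have "mean s = Max (C ` {a. idle (m s) a}) *
        (P s (m s) + (\<Sum>j\<in>UNIV - {m s}. P s j * of_bool (idle j (astar s))))" for s
      unfolding mean_def by (simp only: expected_reward_greedy)
    then show "AE \<omega> in M. avg_reward idle C X Ch \<omega> \<longlonglongrightarrow>
        (\<Sum>s\<in>UNIV. pst s * Max (C ` {a. idle (m s) a}) *
           (P s (m s) + (\<Sum>j\<in>UNIV - {m s}. P s j * of_bool (idle j (astar s)))))"
      using limit by (simp only: mult.assoc)
  next
    assume uniform: "(\<forall>a. C a = c) \<and>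
      (\<forall>s a. q s a = of_bool (idle (m s) a) / real (card {a. idle (m s) a}))"
    then have q_uniform: "q s a = of_bool (idle (m s) a) / real (card {a. idle (m s) a})"
      and C_const: "C a = c" for s a
      by simp_all
    have card_idle: "card {a. idle (m s) a} \<noteq> 0" for s
      by (rule card_nonzero_of_uniform[OF q_uniform q_sum])
    have "mean s = c * (P s (m s) + (\<Sum>j\<in>UNIV - {m s}. P s j *
        real (card ({a. idle j a} \<inter> {a. idle (m s) a})) / real (card {a. idle (m s) a})))" for s
      unfolding mean_def q_uniform C_const by (rule expected_reward_uniform[where idle = idle, OF card_idle])
    then show "AE \<omega> in M. avg_reward idle C X Ch \<omega> \<longlonglongrightarrow>
        c * (\<Sum>s\<in>UNIV. pst s * (P s (m s) + (\<Sum>j\<in>UNIV - {m s}. P s j *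
           real (card ({a. idle j a} \<inter> {a. idle (m s) a})) / real (card {a. idle (m s) a}))))"
      using limit by (simp add: sum_distrib_left mult_ac)
    show "c * (\<Sum>s\<in>UNIV. pst s * (P s (m s) + (\<Sum>j\<in>UNIV - {m s}. P s j *
           real (card ({a. idle j a} \<inter> {a. idle (m s) a})) / real (card {a. idle (m s) a}))))
        = c * (\<Sum>s\<in>UNIV. \<Sum>j\<in>UNIV. pst s * P s j *
           (\<Sum>a\<in>UNIV. of_bool (idle j a) * of_bool (idle (m s) a))
           / (\<Sum>a\<in>UNIV. of_bool (idle (m s) a)))"
      by (simp only: sum_split_overlap_of_bool[where idle = idle, OF card_idle])
  qed
qed

end
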